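(* Let $G\leq \mathrm{Aut}(X^* )$ and $H\le G$. If there is $v\in X^*$ such that $\psi_v(H)$ is finite, then there is a countable independent family $(Y_i)_{i\in\mathbb{N}}$ of $H$-invariant leaf sets such that $\psi_v(H)$ is finite for all $v\in Y_i$ and all $i\in\mathbb{N}$. Furthermore, for any $M\in\mathbb{N}$ the family may be chosen so that $|x|\ge M$ for every $x\in Y_i$ and every $i\in\mathbb{N}$.
   Context: $X^*$ is the free monoid on a finite set $X$, viewed as a rooted tree; $|x|$ is the length of $x$; $\mathrm{Aut}(X^* )$ is the group of prefix-preserving bijections of $X^*$. For $g\in\mathrm{Aut}(X^* )$ and $u\in X^*$ the section $g_u$ is defined by $g(uw)=g(u)g_u(w)$ for all $w$, and $\psi_u(H)=\{h_u:h\in H\}$. A leaf set is a finite subset $Y\subseteq X^*$ such that no element of $Y$ is a prefix of a different element of $Y$; it is $H$-invariant if $h(Y)=Y$ for all $h\in H$. A family $(Y_i)_{i\in I}$ of leaf sets is independent if $\bigcup_{f\in F}Y_f$ is a leaf set for every finite $F\subseteq I$. *)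

theory Defs
  imports "HOL-Library.Sublist"
begin

text \<open>An automorphism of the tree X*
  is a bijection of lists X that preserves the prefix relation in both directions;
  we normalise it to be the identity outside lists X so that it is determined by
  its action on the tree.\<close>

definition tree_aut :: "'a set \<Rightarrow> ('a list \<Rightarrow> 'a list) \<Rightarrow> bool" where
  "tree_aut X g \<longleftrightarrow> bij_betw g (lists X) (lists X)
     \<and> (\<forall>u\<in>lists X. \<forall>w\<in>lists X. prefix u w \<longleftrightarrow> prefix (g u) (g w))
     \<and> (\<forall>w. w \<notin> lists X \<longrightarrow> g w = w)"

definition aut_subgroup :: "'a set \<Rightarrow> ('a list \<Rightarrow> 'a list) set \<Rightarrow> bool" where
  "aut_subgroup X H \<longleftrightarrow> H \<subseteq> {g. tree_aut X g} \<and> id \<in> H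
     \<and> (\<forall>g\<in>H. \<forall>h\<in>H. g \<circ> h \<in> H) \<and> (\<forall>g\<in>H. inv g \<in> H)"

text \<open>The section g_u: g(u w) = g(u) g_u(w); identity outside lists X.\<close>
definition sect :: "'a set \<Rightarrow> ('a list \<Rightarrow> 'a list) \<Rightarrow> 'a list \<Rightarrow> 'a list \<Rightarrow> 'a list" where
  "sect X g u = (\<lambda>w. if w \<in> lists X then drop (length (g u)) (g (u @ w)) else w)"

definition psi :: "'a set \<Rightarrow> 'a list \<Rightarrow> ('a list \<Rightarrow> 'a list) set \<Rightarrow> ('a list \<Rightarrow> 'a list) set" where
  "psi X u H = (\<lambda>h. sect X h u) ` H"

definition leaf_set :: "'a set \<Rightarrow> 'a list set \<Rightarrow> bool" where
  "leaf_set X Y \<longleftrightarrow> finite Y \<and> Y \<subseteq> lists X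
     \<and> (\<forall>y\<in>Y. \<forall>z\<in>Y. prefix y z \<longrightarrow> y = z)"

definition invariant_set :: "('a list \<Rightarrow> 'a list) set \<Rightarrow> 'a list set \<Rightarrow> bool" where
  "invariant_set H Y \<longleftrightarrow> (\<forall>h\<in>H. h ` Y = Y)"

definition independent_family :: "'a set \<Rightarrow> ('i \<Rightarrow> 'a list set) \<Rightarrow> bool" where
  "independent_family X Y \<longleftrightarrow> (\<forall>F. finite F \<longrightarrow> leaf_set X (\<Union>f\<in>F. Y f))"

end

theory Submission
  imports Defs
begin

text \<open>Write S for the finite set \<open>\<psi>\<^sub>v(H)\<close>. A word has at most |S| images under S, fewer than
  the |X|^(|S|+1) words of length |S|+1. Hence one can grow a chain of prefixes p_0 < p_1 < ...,
  starting from a^M and adding |S|+1 letters at a time, such that p_(i+1) is not an image under S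
  of the padded word w_i = p_i a^(|S|+1). Since sections preserve length, for i < j no element of
  S maps w_i to a prefix of w_j: that prefix would be p_(i+1).

  Let Y_j be the H-orbit of v w_j. If h(v w_i) is a prefix of k(v w_j), then g = k^-1 h maps v w_i
  to a prefix of v w_j, so g_v(w_i) is a prefix of w_j; this forces i = j, and then both words
  have the same length. Hence the orbits form an independent family. Their sections stay finite
  because \<open>\<psi>\<^sub>u\<^sub>w(H) = \<psi>\<^sub>w(\<psi>\<^sub>u(H))\<close> and because precomposition with the surjection h_u
  embeds \<open>\<psi>\<^bsub>h(u)\<^esub>(H)\<close> into \<open>\<psi>\<^sub>u(H)\<close>.\<close>

lemma prefix_length_eq: "prefix xs ys \<Longrightarrow> length xs = length ys \<Longrightarrow> xs = ys"
  by (auto simp: prefix_def)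

lemma tree_aut_bij:
  assumes "tree_aut X g"
  shows "bij g"
proof -
  have "bij_betw g (lists X) (lists X)" and "bij_betw g (- lists X) (- lists X)"
    using assms bij_betw_cong[of "- lists X" g id] unfolding tree_aut_def by auto
  then have "bij_betw g (lists X \<union> - lists X) (lists X \<union> - lists X)"
    by (rule bij_betw_combine) blast
  then show ?thesis by simp
qed

lemma tree_aut_image: "tree_aut X g \<Longrightarrow> g ` lists X = lists X"
  unfolding tree_aut_def by (simp add: bij_betw_imp_surj_on)

lemma tree_aut_lists: "tree_aut X g \<Longrightarrow> w \<in> lists X \<Longrightarrow> g w \<in> lists X"
  using tree_aut_image by blast

lemma tree_aut_prefix_iff:
  "tree_aut X g \<Longrightarrow> u \<in> lists X \<Longrightarrow> w \<in> lists X \<Longrightarrow> prefix (g u) (g w) \<longleftrightarrow> prefix u w"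
  unfolding tree_aut_def by blast

lemma tree_aut_inv:
  assumes g: "tree_aut X g"
  shows "tree_aut X (inv g)"
proof -
  have "bij g" using g by (rule tree_aut_bij)
  have image: "g ` lists X = lists X" using g by (rule tree_aut_image)
  then have inv_lists: "inv g w \<in> lists X" if "w \<in> lists X" for w
    using \<open>bij g\<close> that by (metis bij_is_inj image_iff inv_f_f)
  have "bij_betw (inv g) (lists X) (lists X)"
    using bij_betw_inv_into_subset[OF \<open>bij g\<close> subset_UNIV image] .
  moreover have "prefix u w \<longleftrightarrow> prefix (inv g u) (inv g w)" if "u \<in> lists X" "w \<in> lists X" for u w
    using tree_aut_prefix_iff[OF g inv_lists inv_lists] that \<open>bij g\<close>
    by (simp add: bij_is_surj surj_f_inv_f)
  moreover have "inv g w = w" if "w \<notin> lists X" for w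
    using g that \<open>bij g\<close> unfolding tree_aut_def by (simp add: bij_is_inj inv_f_eq)
  ultimately show ?thesis unfolding tree_aut_def by blast
qed

lemma tree_aut_length_ge:
  assumes g: "tree_aut X g" and "w \<in> lists X"
  shows "length w \<le> length (g w)"
  using \<open>w \<in> lists X\<close>
proof (induction w rule: rev_induct)
  case Nil
  then show ?case by simp
next
  case (snoc x xs)
  then have "xs \<in> lists X" by simp
  have "g xs \<noteq> g (xs @ [x])"
    using bij_is_inj[OF tree_aut_bij[OF g]] by (auto dest: injD)
  moreover have "prefix (g xs) (g (xs @ [x]))"
    using tree_aut_prefix_iff[OF g \<open>xs \<in> lists X\<close> snoc.prems] by simp
  ultimately have "length (g xs) < length (g (xs @ [x]))"
    by (simp add: prefix_length_less prefix_order.less_le)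
  with snoc.IH[OF \<open>xs \<in> lists X\<close>] show ?case by simp
qed

lemma tree_aut_length:
  assumes g: "tree_aut X g" and w: "w \<in> lists X"
  shows "length (g w) = length w"
proof -
  have "length (g w) \<le> length (inv g (g w))"
    using tree_aut_length_ge[OF tree_aut_inv[OF g] tree_aut_lists[OF g w]] .
  also have "inv g (g w) = w" using tree_aut_bij[OF g] by (simp add: bij_is_inj)
  finally show ?thesis using tree_aut_length_ge[OF g w] by simp
qed

lemma tree_aut_append:
  assumes g: "tree_aut X g" and u: "u \<in> lists X" and w: "w \<in> lists X"
  shows "g (u @ w) = g u @ sect X g u w"
proof -
  have "prefix (g u) (g (u @ w))" using tree_aut_prefix_iff[OF g u, of "u @ w"] u w by simp
  then show ?thesis using w by (auto simp: sect_def prefix_def)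
qed

lemma sect_lists:
  assumes g: "tree_aut X g" and u: "u \<in> lists X" and w: "w \<in> lists X"
  shows "sect X g u w \<in> lists X"
  using tree_aut_lists[OF g, of "u @ w"] tree_aut_append[OF g u w] u w by simp

lemma length_sect:
  assumes g: "tree_aut X g" and u: "u \<in> lists X" and w: "w \<in> lists X"
  shows "length (sect X g u w) = length w"
  using tree_aut_length[OF g, of "u @ w"] tree_aut_length[OF g u] tree_aut_append[OF g u w] u w
  by simp

lemma sect_append:
  assumes g: "tree_aut X g" and u: "u \<in> lists X" and v: "v \<in> lists X"
  shows "sect X g (u @ v) = sect X (sect X g u) v"
proof
  fix w
  show "sect X g (u @ v) w = sect X (sect X g u) v w"
    using tree_aut_length[OF g, of "u @ v"] tree_aut_length[OF g u] length_sect[OF g u v] u v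
    by (simp add: sect_def add.commute)
qed

lemma sect_comp:
  assumes g: "tree_aut X g" and k: "tree_aut X k" and u: "u \<in> lists X"
  shows "sect X (k \<circ> g) u = sect X k (g u) \<circ> sect X g u"
proof
  fix w
  show "sect X (k \<circ> g) u w = (sect X k (g u) \<circ> sect X g u) w"
  proof (cases "w \<in> lists X")
    case True
    then show ?thesis
      using tree_aut_append[OF g u True] sect_lists[OF g u True] by (simp add: sect_def)
  next
    case False
    then show ?thesis by (simp add: sect_def)
  qed
qed

lemma surj_sect:
  assumes g: "tree_aut X g" and u: "u \<in> lists X"
  shows "surj (sect X g u)"
proof -
  have "w \<in> range (sect X g u)" if w: "w \<in> lists X" for w
  proof -
    have "g u @ w \<in> g ` lists X"
      using tree_aut_image[OF g] tree_aut_lists[OF g u] w by simp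
    then obtain x where x: "x \<in> lists X" "g x = g u @ w" by (metis imageE)
    then have "prefix u x" using tree_aut_prefix_iff[OF g u x(1)] by simp
    then obtain y where "x = u @ y" by (auto simp: prefix_def)
    with x u have "y \<in> lists X" "sect X g u y = w" by (auto simp: sect_def)
    then show ?thesis by (metis rangeI)
  qed
  moreover have "w \<in> range (sect X g u)" if "w \<notin> lists X" for w
    using that by (metis rangeI sect_def)
  ultimately show ?thesis by blast
qed

lemma aut_subgroup_tree_aut: "aut_subgroup X H \<Longrightarrow> h \<in> H \<Longrightarrow> tree_aut X h"
  unfolding aut_subgroup_def by auto

lemma aut_subgroup_id: "aut_subgroup X H \<Longrightarrow> id \<in> H"
  unfolding aut_subgroup_def by auto

lemma aut_subgroup_comp: "aut_subgroup X H \<Longrightarrow> h \<in> H \<Longrightarrow> k \<in> H \<Longrightarrow> h \<circ> k \<in> H"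
  unfolding aut_subgroup_def by auto

lemma aut_subgroup_inv: "aut_subgroup X H \<Longrightarrow> h \<in> H \<Longrightarrow> inv h \<in> H"
  unfolding aut_subgroup_def by auto

lemma psi_append:
  assumes "\<forall>h\<in>H. tree_aut X h" and "u \<in> lists X" and "v \<in> lists X"
  shows "psi X (u @ v) H = psi X v (psi X u H)"
  unfolding psi_def image_image using assms by (simp add: sect_append cong: image_cong)

definition orbit :: "('b \<Rightarrow> 'b) set \<Rightarrow> 'b \<Rightarrow> 'b set" where
  "orbit H x = (\<lambda>h. h x) ` H"

lemma orbit_self: "aut_subgroup X H \<Longrightarrow> x \<in> orbit H x"
  unfolding orbit_def using aut_subgroup_id by (metis id_apply imageI)

lemma orbit_lists_length:
  assumes "aut_subgroup X H" and "x \<in> lists X" and "y \<in> orbit H x"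
  shows "y \<in> lists X \<and> length y = length x"
proof -
  obtain h where "h \<in> H" "y = h x" using assms(3) unfolding orbit_def by blast
  then show ?thesis
    using assms(1,2) tree_aut_lists tree_aut_length aut_subgroup_tree_aut by metis
qed

lemma finite_orbit:
  assumes "finite X" and "aut_subgroup X H" and "x \<in> lists X"
  shows "finite (orbit H x)"
proof (rule finite_subset)
  show "orbit H x \<subseteq> {y. set y \<subseteq> X \<and> length y = length x}"
    using orbit_lists_length[OF assms(2,3)] by blast
qed (use finite_lists_length_eq[OF assms(1)] in blast)

lemma finite_psi_orbit:
  assumes H: "aut_subgroup X H" and u: "u \<in> lists X" and fin: "finite (psi X u H)"
    and y: "y \<in> orbit H u"
  shows "finite (psi X y H)"
proof -
  obtain h where h: "h \<in> H" and "y = h u" using y unfolding orbit_def by blast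
  let ?restrict = "\<lambda>s. s \<circ> sect X h u"
  have hX: "tree_aut X h" using H h by (rule aut_subgroup_tree_aut)
  have "inj_on ?restrict (psi X (h u) H)"
  proof (rule inj_onI, rule ext)
    fix s t w assume eq: "s \<circ> sect X h u = t \<circ> sect X h u"
    obtain z where "w = sect X h u z" using surj_sect[OF hX u] by (metis surjD)
    then show "s w = t w" using eq by (metis comp_apply)
  qed
  moreover have "?restrict ` psi X (h u) H \<subseteq> psi X u H"
  proof
    fix s assume "s \<in> ?restrict ` psi X (h u) H"
    then obtain k where k: "k \<in> H" "s = sect X k (h u) \<circ> sect X h u"
      unfolding psi_def by auto
    then have "s = sect X (k \<circ> h) u"
      using sect_comp[OF hX aut_subgroup_tree_aut[OF H k(1)] u] by simp
    then show "s \<in> psi X u H"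
      unfolding psi_def using aut_subgroup_comp[OF H k(1) h] by blast
  qed
  ultimately show ?thesis using fin \<open>y = h u\<close> by (metis finite_imageD finite_subset)
qed

lemma orbit_eq_length_eq:
  assumes "aut_subgroup X H" and "x \<in> lists X" and "orbit H x = orbit H y"
  shows "length x = length y"
  using orbit_lists_length[OF assms(1,2)] orbit_self[OF assms(1), of y] assms(3) by simp

lemma invariant_set_orbit:
  assumes H: "aut_subgroup X H"
  shows "invariant_set H (orbit H x)"
  unfolding invariant_set_def
proof (intro ballI equalityI subsetI)
  fix h y assume h: "h \<in> H"
  show "y \<in> orbit H x" if y: "y \<in> h ` orbit H x"
  proof -
    obtain k where "k \<in> H" "y = h (k x)" using y unfolding orbit_def by blast
    then show ?thesis using aut_subgroup_comp[OF H h] unfolding orbit_def by (metis comp_apply imageI)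
  qed
  assume "y \<in> orbit H x"
  then obtain k where k: "k \<in> H" "y = k x" unfolding orbit_def by blast
  have "y = h ((inv h \<circ> k) x)"
    using tree_aut_bij[OF aut_subgroup_tree_aut[OF H h]] k(2)
    by (simp add: bij_is_surj surj_f_inv_f)
  moreover have "inv h \<circ> k \<in> H" using H h k(1) by (simp add: aut_subgroup_comp aut_subgroup_inv)
  ultimately show "y \<in> h ` orbit H x" unfolding orbit_def by blast
qed

lemma orbit_prefix:
  assumes H: "aut_subgroup X H" and "x \<in> lists X" "x' \<in> lists X"
    and "y \<in> orbit H x" "z \<in> orbit H x'" and "prefix y z"
  obtains g where "g \<in> H" and "prefix (g x) x'"
proof -
  obtain h k where hk: "h \<in> H" "k \<in> H" "y = h x" "z = k x'"
    using assms(4,5) unfolding orbit_def by blast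
  have kX: "tree_aut X k" and k'X: "tree_aut X (inv k)"
    using H hk(2) by (simp_all add: aut_subgroup_tree_aut aut_subgroup_inv)
  have "prefix (inv k y) (inv k z)"
    using assms(6) tree_aut_prefix_iff[OF k'X] orbit_lists_length[OF H] assms(2-5) by blast
  moreover have "inv k z = x'" using tree_aut_bij[OF kX] hk(4) by (simp add: bij_is_inj)
  ultimately have "prefix ((inv k \<circ> h) x) x'" using hk(3) by simp
  moreover have "inv k \<circ> h \<in> H" using H hk(1,2) by (simp add: aut_subgroup_comp aut_subgroup_inv)
  ultimately show thesis using that by blast
qed

lemma independent_family_orbits:
  fixes w :: "nat \<Rightarrow> 'a list"
  assumes X: "finite X" and H: "aut_subgroup X H" and v: "v \<in> lists X"
    and w: "\<And>j. w j \<in> lists X" and mono: "strict_mono (length \<circ> w)"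
    and avoid: "\<And>i j s. i < j \<Longrightarrow> s \<in> psi X v H \<Longrightarrow> \<not> prefix (s (w i)) (w j)"
  shows "independent_family X (\<lambda>j. orbit H (v @ w j))"
  unfolding independent_family_def leaf_set_def
proof (intro allI impI conjI ballI)
  have vw: "v @ w j \<in> lists X" for j using v w by simp
  fix F :: "nat set" assume "finite F"
  then show "finite (\<Union>j\<in>F. orbit H (v @ w j))"
    using finite_orbit[OF X H vw] by blast
  show "(\<Union>j\<in>F. orbit H (v @ w j)) \<subseteq> lists X"
    using orbit_lists_length[OF H vw] by blast
  fix y z assume "y \<in> (\<Union>j\<in>F. orbit H (v @ w j))" "z \<in> (\<Union>j\<in>F. orbit H (v @ w j))"
    and yz: "prefix y z"
  then obtain i j where y: "y \<in> orbit H (v @ w i)" and z: "z \<in> orbit H (v @ w j)" by blast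
  obtain g where g: "g \<in> H" "prefix (g (v @ w i)) (v @ w j)"
    using orbit_prefix[OF H vw vw y z yz] .
  have gX: "tree_aut X g" using H g(1) by (rule aut_subgroup_tree_aut)
  have "prefix (g v @ sect X g v (w i)) (v @ w j)" using g(2) tree_aut_append[OF gX v w] by simp
  then have prefix_w: "prefix (sect X g v (w i)) (w j)"
    using tree_aut_length[OF gX v] by (auto simp: prefix_def append_eq_append_conv)
  then have "length (w i) \<le> length (w j)"
    using prefix_length_le length_sect[OF gX v w] by metis
  then have "\<not> j < i" using mono by (metis comp_apply leD strict_monoD)
  moreover have "\<not> i < j"
    using avoid prefix_w g(1) unfolding psi_def by blast
  ultimately have "i = j" by simp
  then have "length y = length z" using orbit_lists_length[OF H vw] y z by metis
  then show "y = z" using yz by (rule prefix_length_eq[rotated])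
qed

lemma independent_family_leaf_set: "independent_family X Y \<Longrightarrow> leaf_set X (Y i)"
  unfolding independent_family_def by (drule spec[of _ "{i}"]) simp

lemma exists_extension_avoiding:
  assumes "finite X" and "finite B" and "card B < card X ^ l"
  obtains t where "t \<in> lists X" and "length t = l" and "q @ t \<notin> B"
proof -
  let ?T = "{t. set t \<subseteq> X \<and> length t = l}"
  have "card ((@) q ` ?T) = card ?T" by (rule card_image) (simp add: inj_on_def)
  then have "card ((@) q ` ?T) = card X ^ l" using card_lists_length_eq[OF assms(1)] by simp
  then have "\<not> (@) q ` ?T \<subseteq> B" using card_mono[OF assms(2)] assms(3) by (metis not_le)
  then obtain t where "set t \<subseteq> X" "length t = l" "q @ t \<notin> B" by blast
  then show thesis by (intro that) auto
qed

lemma exists_avoiding_chain: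
  assumes X: "finite X" and p0: "p0 \<in> lists X"
    and B: "\<And>q. q \<in> lists X \<Longrightarrow> finite (B q) \<and> card (B q) < card X ^ l"
  obtains p :: "nat \<Rightarrow> 'a list"
  where "\<And>j. p j \<in> lists X" and "\<And>j. length (p j) = length p0 + j * l"
    and "\<And>i j. i \<le> j \<Longrightarrow> prefix (p i) (p j)" and "\<And>j. p (Suc j) \<notin> B (p j)"
proof -
  define ext where "ext q = (SOME t. t \<in> lists X \<and> length t = l \<and> q @ t \<notin> B q)" for q
  have ext: "ext q \<in> lists X \<and> length (ext q) = l \<and> q @ ext q \<notin> B q" if q: "q \<in> lists X" for q
  proof -
    obtain t where "t \<in> lists X" "length t = l" "q @ t \<notin> B q"
      using exists_extension_avoiding[OF X] B[OF q] by blast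
    then show ?thesis
      unfolding ext_def using someI[of "\<lambda>t. t \<in> lists X \<and> length t = l \<and> q @ t \<notin> B q"] by blast
  qed
  define p where "p = rec_nat p0 (\<lambda>_ q. q @ ext q)"
  have p_0: "p 0 = p0" and p_Suc: "p (Suc j) = p j @ ext (p j)" for j by (simp_all add: p_def)
  have p_lists: "p j \<in> lists X" for j
    by (induction j) (simp_all add: p_0 p_Suc p0 ext)
  show thesis
  proof (rule that)
    show "length (p j) = length p0 + j * l" for j
      by (induction j) (simp_all add: p_0 p_Suc ext p_lists)
    show "prefix (p i) (p j)" if "i \<le> j" for i j
      by (rule prefix_order.lift_Suc_mono_le[of p, OF _ that]) (simp add: p_Suc)
    show "p (Suc j) \<notin> B (p j)" for j by (simp add: p_Suc ext p_lists)
  qed (rule p_lists)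
qed

lemma exists_avoiding_sequence:
  assumes X: "finite X" "2 \<le> card X" and S: "finite S"
    and length_S: "\<forall>s\<in>S. \<forall>w\<in>lists X. length (s w) = length w"
  obtains w :: "nat \<Rightarrow> 'a list"
  where "\<And>j. w j \<in> lists X" and "strict_mono (length \<circ> w)" and "\<And>j. M \<le> length (w j)"
    and "\<And>i j s. i < j \<Longrightarrow> s \<in> S \<Longrightarrow> \<not> prefix (s (w i)) (w j)"
proof -
  obtain a where a: "a \<in> X" using X(2) by (metis card.empty ex_in_conv not_numeral_le_zero)
  have replicate_lists: "replicate n a \<in> lists X" for n using a by (induction n) simp_all
  define l where "l = Suc (card S)"
  define pad where "pad q = q @ replicate l a" for q
  have card_B: "card ((\<lambda>s. s (pad q)) ` S) < card X ^ l" for q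
  proof -
    have "card ((\<lambda>s. s (pad q)) ` S) \<le> card S" by (rule card_image_le[OF S])
    also have "\<dots> < 2 ^ l" using less_exp[of l] unfolding l_def by linarith
    also have "\<dots> \<le> card X ^ l" using X(2) by (rule power_mono) simp
    finally show ?thesis .
  qed
  obtain p where p_lists: "\<And>j. p j \<in> lists X" and p_length: "\<And>j. length (p j) = M + j * l"
    and p_prefix: "\<And>i j. i \<le> j \<Longrightarrow> prefix (p i) (p j)"
    and p_avoid: "\<And>j. p (Suc j) \<notin> (\<lambda>s. s (pad (p j))) ` S"
  proof (rule exists_avoiding_chain[OF X(1), of "replicate M a" "\<lambda>q. (\<lambda>s. s (pad q)) ` S" l])
    show "replicate M a \<in> lists X" by (rule replicate_lists)
    show "finite ((\<lambda>s. s (pad q)) ` S) \<and> card ((\<lambda>s. s (pad q)) ` S) < card X ^ l" for q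
      using S card_B by simp
  qed (rule that; simp)
  have pad_lists: "pad (p j) \<in> lists X" for j using p_lists replicate_lists by (simp add: pad_def)
  have pad_length: "length (pad (p j)) = M + Suc j * l" for j by (simp add: pad_def p_length)
  show thesis
  proof (rule that[of "\<lambda>j. pad (p j)"])
    show "strict_mono (length \<circ> (\<lambda>j. pad (p j)))"
      by (rule strict_monoI) (auto simp: pad_length l_def intro: add_less_le_mono mult_le_mono1)
    fix i j :: nat and s assume "i < j" and "s \<in> S"
    show "\<not> prefix (s (pad (p i))) (pad (p j))"
    proof
      assume prefix_s: "prefix (s (pad (p i))) (pad (p j))"
      have "prefix (p (Suc i)) (pad (p j))"
        using p_prefix[of "Suc i" j] \<open>i < j\<close> by (auto simp: pad_def intro: prefix_order.trans)
      moreover have "length (s (pad (p i))) = length (p (Suc i))"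
        using length_S \<open>s \<in> S\<close> pad_lists pad_length p_length by simp
      ultimately have "s (pad (p i)) = p (Suc i)"
        using prefix_s by (metis prefix_length_eq prefix_length_prefix order_refl)
      then show False using p_avoid[of i] \<open>s \<in> S\<close> by (metis image_eqI)
    qed
  qed (simp_all add: pad_lists pad_length)
qed

theorem lemma4p3:
  fixes X :: "'a set" and G H :: "('a list \<Rightarrow> 'a list) set"
  assumes "finite X" and "2 \<le> card X"
    and "aut_subgroup X G" and "aut_subgroup X H" and "H \<subseteq> G"
    and "\<exists>v\<in>lists X. finite (psi X v H)"
  shows "\<forall>M::nat. \<exists>Y :: nat \<Rightarrow> 'a list set.
           independent_family X Y
         \<and> inj Y
         \<and> (\<forall>i. Y i \<noteq> {} \<and> leaf_set X (Y i) \<and> invariant_set H (Y i))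
         \<and> (\<forall>i. \<forall>v\<in>Y i. finite (psi X v H))
         \<and> (\<forall>i. \<forall>x\<in>Y i. M \<le> length x)"
proof
  fix M :: nat
  note H = \<open>aut_subgroup X H\<close>
  obtain v where v: "v \<in> lists X" and fin_v: "finite (psi X v H)" using assms(6) ..
  have length_psi: "\<forall>s\<in>psi X v H. \<forall>u\<in>lists X. length (s u) = length u"
    using length_sect[OF aut_subgroup_tree_aut[OF H] v] unfolding psi_def by blast
  obtain w :: "nat \<Rightarrow> 'a list" where w: "\<And>j. w j \<in> lists X" and mono: "strict_mono (length \<circ> w)"
    and long: "\<And>j. M \<le> length (w j)"
    and avoid: "\<And>i j s. i < j \<Longrightarrow> s \<in> psi X v H \<Longrightarrow> \<not> prefix (s (w i)) (w j)"
    by (fact exists_avoiding_sequence[where M = M, OF assms(1,2) fin_v length_psi])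
  have vw: "v @ w j \<in> lists X" for j using v w by simp
  have fin_vw: "finite (psi X (v @ w j) H)" for j
    using psi_append[OF _ v w] aut_subgroup_tree_aut[OF H] fin_v by (simp add: psi_def)
  define Y where "Y j = orbit H (v @ w j)" for j
  show "\<exists>Y :: nat \<Rightarrow> 'a list set. independent_family X Y \<and> inj Y
         \<and> (\<forall>i. Y i \<noteq> {} \<and> leaf_set X (Y i) \<and> invariant_set H (Y i))
         \<and> (\<forall>i. \<forall>v\<in>Y i. finite (psi X v H)) \<and> (\<forall>i. \<forall>x\<in>Y i. M \<le> length x)"
  proof (intro exI[of _ Y] conjI allI ballI)
    show indep: "independent_family X Y"
      unfolding Y_def by (rule independent_family_orbits[OF assms(1) H v]) (fact w mono avoid)+
    show "inj Y"
    proof (rule injI)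
      fix i j assume "Y i = Y j"
      then have "length (v @ w i) = length (v @ w j)"
        unfolding Y_def by (rule orbit_eq_length_eq[OF H vw])
      then show "i = j" using strict_mono_eq[OF mono] by simp
    qed
    fix i
    show "Y i \<noteq> {}" using orbit_self[OF H] unfolding Y_def by blast
    show "leaf_set X (Y i)" using indep by (rule independent_family_leaf_set)
    show "invariant_set H (Y i)" unfolding Y_def by (rule invariant_set_orbit[OF H])
    show "finite (psi X y H)" if "y \<in> Y i" for y
      using finite_psi_orbit[OF H vw fin_vw] that unfolding Y_def .
    show "M \<le> length y" if "y \<in> Y i" for y
      using orbit_lists_length[OF H vw] that long[of i] unfolding Y_def by fastforce
  qed
qed

end
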